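(* Let $G$ be a graph with a linear order $<$ on $V(G)$ satisfying the X-property, let $s<t$ be vertices with $d^*:=\operatorname{dist}(s,t)<\infty$, and let $P=p_0,p_1,\dots,p_{d^*}$ (with $p_0=s$, $p_{d^*}=t$) be a shortest $s$-$t$ path. Then $\operatorname{righti}(P)<\operatorname{lefti}(P)$ holds if and only if $P$ contains a pair of crossing edges. Moreover, if $P$ contains a pair of crossing edges, then $\operatorname{righti}(P)=\operatorname{lefti}(P)-1$ and $p_i<p_j$ for all indices $i<\operatorname{righti}(P)<\operatorname{lefti}(P)<j$.
   Context: The X-property: for all vertices $p<q<r<s$, if $\{p,r\}\in E(G)$ and $\{q,s\}\in E(G)$ then $\{p,s\}\in E(G)$. $\operatorname{dist}$ is the number of edges of a shortest path. $\operatorname{lefti}(P)$ is the index $i$ such that $p_i$ is the leftmost (w.r.t. $<$) vertex of $P$, and $\operatorname{righti}(P)$ the index of the rightmost vertex of $P$. Two edges $\{a,b\}$, $\{c,d\}$ with $a<b$, $c<d$ are crossing if $a<c<b<d$ or $c<a<d<b$. *)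

theory Defs
  imports Main
begin

definition graph :: "'a set \<Rightarrow> 'a set set \<Rightarrow> bool" where
  "graph V E \<longleftrightarrow> (\<forall>e\<in>E. \<exists>u v. e = {u, v} \<and> u \<noteq> v \<and> u \<in> V \<and> v \<in> V)"

definition x_property :: "('a::linorder) set \<Rightarrow> 'a set set \<Rightarrow> bool" where
  "x_property V E \<longleftrightarrow> (\<forall>p\<in>V. \<forall>q\<in>V. \<forall>r\<in>V. \<forall>s\<in>V.
      p < q \<and> q < r \<and> r < s \<and> {p, r} \<in> E \<and> {q, s} \<in> E \<longrightarrow> {p, s} \<in> E)"

definition is_walk :: "'a set \<Rightarrow> 'a set set \<Rightarrow> 'a list \<Rightarrow> bool" where
  "is_walk V E ps \<longleftrightarrow> ps \<noteq> [] \<and> set ps \<subseteq> V \<and>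
     (\<forall>i. Suc i < length ps \<longrightarrow> {ps ! i, ps ! Suc i} \<in> E)"

definition walk_between :: "'a set \<Rightarrow> 'a set set \<Rightarrow> 'a \<Rightarrow> 'a \<Rightarrow> 'a list \<Rightarrow> bool" where
  "walk_between V E s t ps \<longleftrightarrow> is_walk V E ps \<and> hd ps = s \<and> last ps = t"

definition dist_finite :: "'a set \<Rightarrow> 'a set set \<Rightarrow> 'a \<Rightarrow> 'a \<Rightarrow> bool" where
  "dist_finite V E s t \<longleftrightarrow> (\<exists>ps. walk_between V E s t ps)"

definition dist :: "'a set \<Rightarrow> 'a set set \<Rightarrow> 'a \<Rightarrow> 'a \<Rightarrow> nat" where
  "dist V E s t = (LEAST n. \<exists>ps. walk_between V E s t ps \<and> length ps = Suc n)"

definition shortest_path :: "'a set \<Rightarrow> 'a set set \<Rightarrow> 'a \<Rightarrow> 'a \<Rightarrow> 'a list \<Rightarrow> bool" where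
  "shortest_path V E s t ps \<longleftrightarrow> walk_between V E s t ps \<and> length ps = Suc (dist V E s t)"

definition lefti :: "('a::linorder) list \<Rightarrow> nat" where
  "lefti ps = (THE i. i < length ps \<and> ps ! i = Min (set ps))"

definition righti :: "('a::linorder) list \<Rightarrow> nat" where
  "righti ps = (THE i. i < length ps \<and> ps ! i = Max (set ps))"

definition crossing :: "('a::linorder) \<Rightarrow> 'a \<Rightarrow> 'a \<Rightarrow> 'a \<Rightarrow> bool" where
  "crossing a b c d \<longleftrightarrow> a < c \<and> c < b \<and> b < d \<or> c < a \<and> a < d \<and> d < b"

definition path_has_crossing :: "('a::linorder) list \<Rightarrow> bool" where
  "path_has_crossing ps \<longleftrightarrow> (\<exists>i j. Suc i < length ps \<and> Suc j < length ps \<and>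
     crossing (min (ps!i) (ps!Suc i)) (max (ps!i) (ps!Suc i))
              (min (ps!j) (ps!Suc j)) (max (ps!j) (ps!Suc j)))"

end

theory Submission
  imports Defs
begin

text \<open>A shortest path is induced, so by the X-property two of its edges can only cross if they
  are edges \<open>i\<close> and \<open>i + 2\<close>, arranged as \<open>p\<^bsub>i+2\<^esub> < p\<^bsub>i\<^esub> < p\<^bsub>i+3\<^esub> < p\<^bsub>i+1\<^esub>\<close> or in
  the mirror pattern. Moreover, an edge whose span separates two vertices of a segment of the path
  avoiding it is crossed by an edge of that segment. This pins the whole path down: in the first
  pattern \<open>p\<^bsub>i+1\<^esub>\<close> is the rightmost and \<open>p\<^bsub>i+2\<^esub>\<close> the leftmost vertex, and everything before
  \<open>p\<^bsub>i+1\<^esub>\<close> lies left of everything after \<open>p\<^bsub>i+2\<^esub>\<close>; the mirror pattern would likewise force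
  \<open>t < s\<close>. Conversely, if the rightmost vertex comes first, the subpath from \<open>s\<close> to it has an
  edge spanning \<open>t\<close>, and the subpath from the leftmost vertex to \<open>t\<close> must cross that edge.\<close>

lemma ex_change_point:
  fixes Q :: "nat \<Rightarrow> bool"
  assumes "lo \<le> hi" and "Q lo \<noteq> Q hi"
  shows "\<exists>k. lo \<le> k \<and> k < hi \<and> Q k \<noteq> Q (Suc k)"
  using assms
proof (induction hi)
  case (Suc hi)
  then have "lo \<le> hi" by (metis le_Suc_eq)
  show ?case
  proof (cases "Q hi = Q (Suc hi)")
    case True
    then show ?thesis using Suc.IH \<open>lo \<le> hi\<close> Suc.prems(2) less_SucI by metis
  next
    case False
    then show ?thesis using \<open>lo \<le> hi\<close> by blast
  qed
qed simp

definition strictly_between :: "'a::linorder \<Rightarrow> 'a \<Rightarrow> 'a \<Rightarrow> bool" where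
  "strictly_between u v x \<longleftrightarrow> min u v < x \<and> x < max u v"

lemma strictly_between_if_change:
  assumes "(u < x) \<noteq> (v < x)" "u \<noteq> x" "v \<noteq> x"
  shows "strictly_between u v x"
proof (cases "u < x")
  case True
  with assms have "x < v" by auto
  with True have "u \<le> v" by order
  with True \<open>x < v\<close> show ?thesis unfolding strictly_between_def by (simp add: min_def max_def)
next
  case False
  with assms have "x < u" "v < x" by auto
  moreover from this have "\<not> u \<le> v" by order
  ultimately show ?thesis unfolding strictly_between_def by (simp add: min_def max_def)
qed

lemma not_strictly_between_if_le: "x \<le> u \<Longrightarrow> x \<le> v \<Longrightarrow> \<not> strictly_between u v x"
  unfolding strictly_between_def by (simp add: min_less_iff_disj not_less)

lemma not_strictly_between_if_ge: "u \<le> x \<Longrightarrow> v \<le> x \<Longrightarrow> \<not> strictly_between u v x"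
  unfolding strictly_between_def by (simp add: less_max_iff_disj not_less)

abbreviation cross_edges :: "'a::linorder \<Rightarrow> 'a \<Rightarrow> 'a \<Rightarrow> 'a \<Rightarrow> bool" where
  "cross_edges u v w z \<equiv> crossing (min u v) (max u v) (min w z) (max w z)"

lemma crossing_commute: "crossing a b c d = crossing c d a b"
  unfolding crossing_def by auto

lemma cross_edges_distinct: "cross_edges u v w z \<Longrightarrow> distinct [u, v, w, z]"
  unfolding crossing_def min_def max_def by (auto split: if_splits)

lemma cross_edges_if_separates:
  assumes "u \<noteq> v" "w \<notin> {u, v}" "z \<notin> {u, v}"
    and "strictly_between u v w \<noteq> strictly_between u v z"
  shows "cross_edges w z u v"
  using assms unfolding crossing_def strictly_between_def min_def max_def
  by (auto split: if_splits)

lemma cross_edges_outer_pattern: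
  assumes "cross_edges u v w z" and "\<forall>q\<in>{u, v, w, z}. min v w \<le> q \<and> q \<le> max v w"
  shows "w < u \<and> u < z \<and> z < v \<or> v < z \<and> z < u \<and> u < w"
  using assms unfolding crossing_def min_def max_def by (auto split: if_splits)

lemma x_propertyD:
  assumes "x_property V E" and "p \<in> V" "q \<in> V" "r \<in> V" "s \<in> V"
    and "p < q" "q < r" "r < s" and "{p, r} \<in> E" "{q, s} \<in> E"
  shows "{p, s} \<in> E"
  using assms unfolding x_property_def by blast

lemma x_property_outer_edge:
  assumes "x_property V E" and "u \<in> V" "v \<in> V" "w \<in> V" "z \<in> V"
    and "{u, v} \<in> E" "{w, z} \<in> E" and "cross_edges u v w z"
  shows "\<exists>x\<in>{u, v}. \<exists>y\<in>{w, z}. {x, y} \<in> E \<and> (\<forall>q\<in>{u, v, w, z}. min x y \<le> q \<and> q \<le> max x y)"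
proof -
  define a b c d where "a = min u v" "b = max u v" "c = min w z" "d = max w z"
  have ab: "{a, b} = {u, v}" and cd: "{c, d} = {w, z}"
    unfolding a_b_c_d_def min_def max_def by auto
  have in_V: "a \<in> V" "b \<in> V" "c \<in> V" "d \<in> V"
    using assms(2-5) unfolding a_b_c_d_def min_def max_def by simp_all
  have in_E: "{a, b} \<in> E" "{c, d} \<in> E" using ab cd assms(6,7) by simp_all
  have range: "a \<le> u" "a \<le> v" "u \<le> b" "v \<le> b" "c \<le> w" "c \<le> z" "w \<le> d" "z \<le> d"
    unfolding a_b_c_d_def by auto
  have "a < c \<and> c < b \<and> b < d \<or> c < a \<and> a < d \<and> d < b"
    using assms(8) unfolding crossing_def a_b_c_d_def .
  then show ?thesis
  proof
    assume order: "a < c \<and> c < b \<and> b < d"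
    then have "{a, d} \<in> E" using x_propertyD[OF assms(1) in_V(1,3,2,4)] in_E by blast
    moreover have "\<forall>q\<in>{u, v, w, z}. min a d \<le> q \<and> q \<le> max a d"
      using order range by (auto simp: min_def max_def)
    moreover have "a \<in> {u, v}" "d \<in> {w, z}" using ab cd by auto
    ultimately show ?thesis by blast
  next
    assume order: "c < a \<and> a < d \<and> d < b"
    then have "{c, b} \<in> E" using x_propertyD[OF assms(1) in_V(3,1,4,2)] in_E by blast
    then have "{b, c} \<in> E" by (simp add: insert_commute)
    moreover have "\<forall>q\<in>{u, v, w, z}. min b c \<le> q \<and> q \<le> max b c"
      using order range by (auto simp: min_def max_def)
    moreover have "b \<in> {u, v}" "c \<in> {w, z}" using ab cd by auto
    ultimately show ?thesis by blast
  qed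
qed

lemma righti_eqI:
  assumes "distinct ps" "i < length ps" "\<And>k. k < length ps \<Longrightarrow> ps ! k \<le> ps ! i"
  shows "righti ps = i"
proof -
  have "ps ! i = Max (set ps)"
    using assms(2,3) by (intro Max_eqI[symmetric]) (auto simp: in_set_conv_nth)
  then show ?thesis
    unfolding righti_def using assms(1,2) by (intro the_equality) (simp, metis nth_eq_iff_index_eq)
qed

lemma lefti_eqI:
  assumes "distinct ps" "i < length ps" "\<And>k. k < length ps \<Longrightarrow> ps ! i \<le> ps ! k"
  shows "lefti ps = i"
proof -
  have "ps ! i = Min (set ps)"
    using assms(2,3) by (intro Min_eqI[symmetric]) (auto simp: in_set_conv_nth)
  then show ?thesis
    unfolding lefti_def using assms(1,2) by (intro the_equality) (simp, metis nth_eq_iff_index_eq)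
qed

lemma righti_nth_Max:
  assumes "distinct ps" "ps \<noteq> []"
  shows "righti ps < length ps \<and> ps ! righti ps = Max (set ps)"
proof -
  obtain r where r: "r < length ps" "ps ! r = Max (set ps)"
    using Max_in[of "set ps"] assms(2) by (auto simp: in_set_conv_nth)
  then have "righti ps = r" using assms(1) by (intro righti_eqI) auto
  then show ?thesis using r by simp
qed

lemma lefti_nth_Min:
  assumes "distinct ps" "ps \<noteq> []"
  shows "lefti ps < length ps \<and> ps ! lefti ps = Min (set ps)"
proof -
  obtain l where l: "l < length ps" "ps ! l = Min (set ps)"
    using Min_in[of "set ps"] assms(2) by (auto simp: in_set_conv_nth)
  then have "lefti ps = l" using assms(1) by (intro lefti_eqI) auto
  then show ?thesis using l by simp
qed

locale induced_path =
  fixes V :: "('a::linorder) set" and E :: "'a set set" and ps :: "'a list"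
  assumes x_property: "x_property V E"
    and set_subset: "set ps \<subseteq> V"
    and distinct_path: "distinct ps"
    and path_edge: "Suc i < length ps \<Longrightarrow> {ps ! i, ps ! Suc i} \<in> E"
    and edge_consecutive:
      "x < length ps \<Longrightarrow> y < length ps \<Longrightarrow> {ps ! x, ps ! y} \<in> E \<Longrightarrow> x = Suc y \<or> y = Suc x"
begin

abbreviation edges_cross :: "nat \<Rightarrow> nat \<Rightarrow> bool" where
  "edges_cross i j \<equiv> cross_edges (ps ! i) (ps ! Suc i) (ps ! j) (ps ! Suc j)"

abbreviation spans :: "nat \<Rightarrow> 'a \<Rightarrow> bool" where
  "spans j x \<equiv> strictly_between (ps ! j) (ps ! Suc j) x"

definition crossing_down :: "nat \<Rightarrow> bool" where
  "crossing_down i \<longleftrightarrow> ps ! Suc (Suc i) < ps ! i \<and> ps ! i < ps ! Suc (Suc (Suc i))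
     \<and> ps ! Suc (Suc (Suc i)) < ps ! Suc i"

definition crossing_up :: "nat \<Rightarrow> bool" where
  "crossing_up i \<longleftrightarrow> ps ! Suc i < ps ! Suc (Suc (Suc i)) \<and> ps ! Suc (Suc (Suc i)) < ps ! i
     \<and> ps ! i < ps ! Suc (Suc i)"

lemma nth_neq: "i < length ps \<Longrightarrow> j < length ps \<Longrightarrow> i \<noteq> j \<Longrightarrow> ps ! i \<noteq> ps ! j"
  using distinct_path nth_eq_iff_index_eq by blast

lemma edges_cross_shape:
  assumes cross: "edges_cross i j" and "i \<le> j" and j: "Suc j < length ps"
  shows "j = Suc (Suc i) \<and> (crossing_down i \<or> crossing_up i)"
proof -
  have i: "Suc i < length ps" using assms(2) j by simp
  let ?u = "ps ! i" and ?v = "ps ! Suc i" and ?w = "ps ! j" and ?z = "ps ! Suc j"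
  have "?u \<in> V" "?v \<in> V" "?w \<in> V" "?z \<in> V" using set_subset i j by auto
  then obtain x y where xy: "x \<in> {?u, ?v}" "y \<in> {?w, ?z}" "{x, y} \<in> E"
    and outer: "\<forall>q\<in>{?u, ?v, ?w, ?z}. min x y \<le> q \<and> q \<le> max x y"
    using x_property_outer_edge[OF x_property _ _ _ _ path_edge[OF i] path_edge[OF j] cross]
    by blast
  have "distinct [?u, ?v, ?w, ?z]" using cross by (rule cross_edges_distinct)
  then have "i \<noteq> j" "Suc i \<noteq> j" by auto
  txt \<open>Only consecutive vertices are adjacent, so the outer edge is the middle edge \<open>i + 1\<close>.\<close>
  then have "j = Suc (Suc i) \<and> x = ?v \<and> y = ?w"
    using xy assms(2) i j edge_consecutive[of i j] edge_consecutive[of i "Suc j"]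
      edge_consecutive[of "Suc i" j] edge_consecutive[of "Suc i" "Suc j"]
    by auto
  moreover have "?w < ?u \<and> ?u < ?z \<and> ?z < ?v \<or> ?v < ?z \<and> ?z < ?u \<and> ?u < ?w"
    using cross_edges_outer_pattern[OF cross] outer calculation by blast
  ultimately show ?thesis unfolding crossing_down_def crossing_up_def by auto
qed

lemma edges_cross_between:
  assumes j: "Suc j < length ps" and "lo \<le> hi" "hi < length ps" and avoid: "hi < j \<or> Suc j < lo"
    and "spans j (ps ! lo) \<noteq> spans j (ps ! hi)"
  shows "\<exists>m. lo \<le> m \<and> m < hi \<and> edges_cross m j"
proof -
  obtain m where m: "lo \<le> m" "m < hi" "spans j (ps ! m) \<noteq> spans j (ps ! Suc m)"
    using ex_change_point[of lo hi "\<lambda>k. spans j (ps ! k)"] assms(2,5) by auto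
  have "edges_cross m j"
    using m assms(3) j avoid
      nth_neq[of j "Suc j"] nth_neq[of m j] nth_neq[of m "Suc j"]
      nth_neq[of "Suc m" j] nth_neq[of "Suc m" "Suc j"]
    by (intro cross_edges_if_separates) auto
  with m show ?thesis by blast
qed

context
  fixes i
  assumes bound: "Suc (Suc (Suc i)) < length ps" and down: "crossing_down i"
begin

lemma down_order:
  "ps ! Suc (Suc i) < ps ! i" "ps ! i < ps ! Suc (Suc (Suc i))"
  "ps ! Suc (Suc (Suc i)) < ps ! Suc i"
  using down unfolding crossing_down_def by auto

lemma down_prefix_within:
  assumes "k \<le> i"
  shows "ps ! Suc (Suc i) < ps ! k \<and> ps ! k < ps ! Suc i"
proof (rule ccontr)
  assume "\<not> ?thesis"
  then have "spans (Suc i) (ps ! k) \<noteq> spans (Suc i) (ps ! i)"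
    using down_order by (auto simp: strictly_between_def)
  then obtain m where m: "m < i" and cross: "edges_cross m (Suc i)"
    using edges_cross_between[of "Suc i" k i] bound assms by auto
  have "Suc i = Suc (Suc m) \<and> (crossing_down m \<or> crossing_up m)"
    by (rule edges_cross_shape[OF cross]) (use m bound in simp_all)
  then have "i = Suc m" "crossing_down m \<or> crossing_up m" by simp_all
  then show False
    using down_order unfolding crossing_down_def crossing_up_def by (metis less_asym less_trans)
qed

lemma down_suffix_within:
  assumes "Suc (Suc (Suc i)) \<le> k" "k < length ps"
  shows "ps ! Suc (Suc i) < ps ! k \<and> ps ! k < ps ! Suc i"
proof (rule ccontr)
  assume "\<not> ?thesis"
  then have "spans (Suc i) (ps ! Suc (Suc (Suc i))) \<noteq> spans (Suc i) (ps ! k)"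
    using down_order by (auto simp: strictly_between_def)
  then obtain m where m: "Suc (Suc (Suc i)) \<le> m" "m < k" and cross: "edges_cross m (Suc i)"
    using edges_cross_between[of "Suc i" "Suc (Suc (Suc i))" k] bound assms by auto
  have "edges_cross (Suc i) m" using cross crossing_commute by blast
  then have "crossing_down (Suc i) \<or> crossing_up (Suc i)"
    using edges_cross_shape m assms by simp
  then show False
    using down_order unfolding crossing_down_def crossing_up_def by (metis less_asym less_trans)
qed

lemma down_prefix_below:
  assumes "k \<le> i"
  shows "ps ! k < ps ! Suc (Suc (Suc i))"
proof (rule ccontr)
  assume "\<not> ?thesis"
  then have "spans (Suc (Suc i)) (ps ! k) \<noteq> spans (Suc (Suc i)) (ps ! i)"
    using down_order by (auto simp: strictly_between_def)
  then obtain m where m: "m < i" and cross: "edges_cross m (Suc (Suc i))"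
    using edges_cross_between[of "Suc (Suc i)" k i] bound assms by auto
  have "Suc (Suc i) = Suc (Suc m)" using edges_cross_shape[OF cross] m bound by simp
  with m show False by simp
qed

lemma down_suffix_above:
  assumes "Suc (Suc (Suc i)) \<le> k" "k < length ps"
  shows "ps ! i < ps ! k"
proof (rule ccontr)
  assume "\<not> ?thesis"
  then have "spans i (ps ! Suc (Suc (Suc i))) \<noteq> spans i (ps ! k)"
    using down_order by (auto simp: strictly_between_def)
  then obtain m where m: "Suc (Suc (Suc i)) \<le> m" "m < k" and cross: "edges_cross m i"
    using edges_cross_between[of i "Suc (Suc (Suc i))" k] bound assms by auto
  have "edges_cross i m" using cross crossing_commute by blast
  then have "m = Suc (Suc i)" using edges_cross_shape m assms by simp
  with m show False by simp
qed

lemma down_prefix_less_suffix: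
  assumes j: "j \<le> i" and k: "Suc (Suc (Suc i)) \<le> k" "k < length ps"
  shows "ps ! j < ps ! k"
proof (rule ccontr)
  assume "\<not> ?thesis"
  moreover have "ps ! i < ps ! k" using down_suffix_above k .
  txt \<open>Some edge \<open>m\<close> of the prefix spans \<open>p\<^bsub>k\<^esub>\<close> but not \<open>p\<^bsub>i+3\<^esub>\<close>, so the suffix from
    \<open>p\<^bsub>i+3\<^esub>\<close> to \<open>p\<^bsub>k\<^esub>\<close> crosses it.\<close>
  ultimately obtain m where m: "j \<le> m" "m < i" "(ps ! m < ps ! k) \<noteq> (ps ! Suc m < ps ! k)"
    using ex_change_point[of j i "\<lambda>q. ps ! q < ps ! k"] j by auto
  have "ps ! m \<noteq> ps ! k" "ps ! Suc m \<noteq> ps ! k"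
    using nth_neq[of m k] nth_neq[of "Suc m" k] m k by auto
  then have "spans m (ps ! k)" by (rule strictly_between_if_change[OF m(3)])
  moreover have "\<not> spans m (ps ! Suc (Suc (Suc i)))"
    using down_prefix_below[of m] down_prefix_below[of "Suc m"] m
    by (simp add: not_strictly_between_if_ge less_imp_le)
  ultimately obtain m' where m': "Suc (Suc (Suc i)) \<le> m'" "m' < k" and cross: "edges_cross m' m"
    using edges_cross_between[of m "Suc (Suc (Suc i))" k] m k bound by auto
  have "edges_cross m m'" using cross crossing_commute by blast
  then have "m' = Suc (Suc m)" using edges_cross_shape m m' k by simp
  with m m' show False by simp
qed

lemma righti_lefti_down: "righti ps = Suc i" "lefti ps = Suc (Suc i)"
proof -
  have middle: "ps ! Suc (Suc i) < ps ! Suc i"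
    using down_order by (meson less_trans)
  have "ps ! k \<le> ps ! Suc i \<and> ps ! Suc (Suc i) \<le> ps ! k" if "k < length ps" for k
  proof -
    consider "k \<le> i" | "k = Suc i" | "k = Suc (Suc i)" | "Suc (Suc (Suc i)) \<le> k"
      by linarith
    then show ?thesis
    proof cases
      case 1
      then show ?thesis using down_prefix_within by (simp add: less_imp_le)
    next
      case 4
      then show ?thesis using down_suffix_within that by (simp add: less_imp_le)
    qed (use middle in \<open>auto simp: less_imp_le\<close>)
  qed
  then show "righti ps = Suc i" "lefti ps = Suc (Suc i)"
    by (intro righti_eqI lefti_eqI distinct_path; use bound in simp)+
qed

end

end

lemma induced_path_rev:
  assumes "induced_path V E ps"
  shows "induced_path V E (rev ps)"
proof -
  interpret induced_path V E ps by (fact assms)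
  show ?thesis
  proof
    fix i assume "Suc i < length (rev ps)"
    then show "{rev ps ! i, rev ps ! Suc i} \<in> E"
      using path_edge[of "length ps - Suc (Suc i)"]
      by (auto simp: rev_nth insert_commute Suc_diff_Suc)
  next
    fix x y
    assume xy: "x < length (rev ps)" "y < length (rev ps)" "{rev ps ! x, rev ps ! y} \<in> E"
    then have "length ps - Suc x = Suc (length ps - Suc y) \<or>
        length ps - Suc y = Suc (length ps - Suc x)"
      using edge_consecutive[of "length ps - Suc x" "length ps - Suc y"] by (simp add: rev_nth)
    then show "x = Suc y \<or> y = Suc x" using xy by auto
  qed (use x_property set_subset distinct_path in auto)
qed

context induced_path
begin

lemma crossing_up_last_less_hd:
  assumes bound: "Suc (Suc (Suc i)) < length ps" and "crossing_up i"
  shows "last ps < hd ps"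
proof -
  interpret rev: induced_path V E "rev ps"
    using induced_path_rev induced_path_axioms by blast
  define n where "n = length ps"
  define i' where "i' = n - 4 - i"
  have bound': "Suc (Suc (Suc i')) < length (rev ps)" using bound unfolding i'_def n_def by auto
  have "n - Suc i' = Suc (Suc (Suc i))" "n - Suc (Suc i') = Suc (Suc i)"
    "n - Suc (Suc (Suc i')) = Suc i" "n - Suc (Suc (Suc (Suc i'))) = i"
    using bound unfolding i'_def n_def by auto
  txt \<open>Reversal turns the pattern \<open>crossing_up\<close> into \<open>crossing_down\<close>.\<close>
  then have "rev.crossing_down i'"
    using assms(2) bound' unfolding rev.crossing_down_def crossing_up_def
    by (simp add: rev_nth n_def)
  then have "rev ps ! 0 < rev ps ! (n - 1)"
    using rev.down_prefix_less_suffix[OF bound'] bound unfolding i'_def n_def by auto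
  moreover have "ps \<noteq> []" using bound by auto
  then have "rev ps ! 0 = last ps" "rev ps ! (n - 1) = hd ps"
    unfolding n_def by (simp_all add: rev_nth last_conv_nth hd_conv_nth)
  ultimately show ?thesis by simp
qed

lemma path_has_crossing_pattern:
  assumes "path_has_crossing ps"
  obtains i where "Suc (Suc (Suc i)) < length ps" "crossing_down i \<or> crossing_up i"
proof -
  obtain i j where le: "i \<le> j" and j: "Suc j < length ps" and cross: "edges_cross i j"
  proof -
    obtain i j where ij: "Suc i < length ps" "Suc j < length ps" "edges_cross i j"
      using assms unfolding path_has_crossing_def by blast
    show ?thesis
    proof (cases "i \<le> j")
      case True
      then show ?thesis by (rule that[OF _ ij(2,3)])
    next
      case False
      then have "j \<le> i" by simp
      moreover have "edges_cross j i" using ij(3) crossing_commute by blast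
      ultimately show ?thesis by (rule that[OF _ ij(1)])
    qed
  qed
  have "j = Suc (Suc i)" and pattern: "crossing_down i \<or> crossing_up i"
    using edges_cross_shape[OF cross le j] by blast+
  show ?thesis by (rule that[OF _ pattern]) (use j \<open>j = Suc (Suc i)\<close> in simp)
qed

lemma righti_less_lefti_crossing:
  assumes "ps \<noteq> []" and ends: "hd ps < last ps" and order: "righti ps < lefti ps"
  shows "path_has_crossing ps"
proof -
  define n r l where "n = length ps" "r = righti ps" "l = lefti ps"
  have r: "r < n" "ps ! r = Max (set ps)" and l: "l < n" "ps ! l = Min (set ps)"
    using righti_nth_Max[OF distinct_path assms(1)] lefti_nth_Min[OF distinct_path assms(1)]
    unfolding n_r_l_def by auto
  have "r < l" using order unfolding n_r_l_def .
  have first: "ps ! 0 < ps ! (n - 1)"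
    using ends assms(1) unfolding n_r_l_def by (simp add: hd_conv_nth last_conv_nth)
  have "ps ! (n - 1) \<le> ps ! r" using r assms(1) unfolding n_r_l_def by simp
  moreover have "ps ! (n - 1) \<noteq> ps ! r"
    using nth_neq[of "n - 1" r] r l \<open>r < l\<close> unfolding n_r_l_def by simp
  ultimately have "\<not> ps ! r < ps ! (n - 1)" by simp
  then obtain k where k: "k < r" "(ps ! k < ps ! (n - 1)) \<noteq> (ps ! Suc k < ps ! (n - 1))"
    using ex_change_point[of 0 r "\<lambda>q. ps ! q < ps ! (n - 1)"] first by auto
  have k_edge: "Suc k < length ps" using k r unfolding n_r_l_def by simp
  have "ps ! k \<noteq> ps ! (n - 1)" "ps ! Suc k \<noteq> ps ! (n - 1)"
    using nth_neq[of k "n - 1"] nth_neq[of "Suc k" "n - 1"] k r l \<open>r < l\<close>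
    unfolding n_r_l_def by auto
  then have "spans k (ps ! (n - 1))" by (rule strictly_between_if_change[OF k(2)])
  moreover have "\<not> spans k (ps ! l)"
    using l k r unfolding n_r_l_def by (simp add: not_strictly_between_if_le)
  ultimately have "\<exists>m. l \<le> m \<and> m < n - 1 \<and> edges_cross m k"
    using k r l \<open>r < l\<close> unfolding n_r_l_def by (intro edges_cross_between k_edge) auto
  then obtain m where "m < n - 1" "edges_cross m k" by blast
  then show ?thesis
    unfolding path_has_crossing_def using k_edge unfolding n_r_l_def
    by (intro exI[of _ m] exI[of _ k]) simp
qed

end

lemma graph_no_loop:
  assumes "graph V E"
  shows "{u} \<notin> E"
proof
  assume "{u} \<in> E"
  then obtain a b where ab: "{u} = {a, b}" "a \<noteq> b" using assms unfolding graph_def by blast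
  then have "a = u" "b = u"
    using insertI1[of a "{b}"] insertI1[of b "{a}"] by (auto simp: insert_commute)
  with ab show False by simp
qed

lemma is_walk_take: "is_walk V E ps \<Longrightarrow> k < length ps \<Longrightarrow> is_walk V E (take (Suc k) ps)"
  unfolding is_walk_def by (auto dest: in_set_takeD)

lemma is_walk_shortcut:
  assumes walk: "is_walk V E ps" and "i < j" "j < length ps" and "{ps ! i, ps ! j} \<in> E"
  shows "is_walk V E (take (Suc i) ps @ drop j ps)"
  unfolding is_walk_def
proof (intro conjI allI impI)
  show "take (Suc i) ps @ drop j ps \<noteq> []" "set (take (Suc i) ps @ drop j ps) \<subseteq> V"
    using walk assms(2,3) unfolding is_walk_def by (auto dest: in_set_takeD in_set_dropD)
next
  fix q assume q: "Suc q < length (take (Suc i) ps @ drop j ps)"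
  consider "q < i" | "q = i" | "i < q" by linarith
  then show "{(take (Suc i) ps @ drop j ps) ! q, (take (Suc i) ps @ drop j ps) ! Suc q} \<in> E"
  proof cases
    case 3
    then have "Suc (q - Suc i + j) < length ps" "Suc q - Suc i = Suc (q - Suc i)"
      using q assms(2,3) by auto
    then show ?thesis using walk assms(2,3) 3 unfolding is_walk_def by (auto simp: nth_append)
  qed (use walk assms in \<open>auto simp: nth_append is_walk_def\<close>)
qed

context
  fixes V :: "('a::linorder) set" and E s t P
  assumes shortest: "shortest_path V E s t P"
begin

lemma shortest_path_length_le:
  assumes "walk_between V E s t q"
  shows "length P \<le> length q"
proof -
  have "q \<noteq> []" using assms unfolding walk_between_def is_walk_def by auto
  then have "dist V E s t \<le> length q - 1"
    unfolding dist_def using assms by (intro Least_le) (metis Suc_pred' length_greater_0_conv)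
  then show ?thesis using shortest \<open>q \<noteq> []\<close> unfolding shortest_path_def by (cases q) auto
qed

lemma shortest_path_no_shortcut:
  assumes "Suc i < j" "j < length P"
  shows "{P ! i, P ! j} \<notin> E"
proof
  assume "{P ! i, P ! j} \<in> E"
  moreover have walk: "is_walk V E P" and "hd P = s" "last P = t"
    using shortest unfolding shortest_path_def walk_between_def by auto
  moreover have "i < j" "P \<noteq> []" using assms by auto
  ultimately have "walk_between V E s t (take (Suc i) P @ drop j P)"
    using is_walk_shortcut[OF walk _ assms(2)] assms unfolding walk_between_def
    by (auto simp: last_append)
  then show False using shortest_path_length_le assms by fastforce
qed

lemma shortest_path_distinct: "distinct P"
proof (rule ccontr)
  assume "\<not> distinct P"
  then obtain x y where xy: "x < y" "y < length P" "P ! x = P ! y"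
    by (metis distinct_conv_nth linorder_neqE_nat)
  have walk: "is_walk V E P" and ends: "hd P = s" "last P = t"
    using shortest unfolding shortest_path_def walk_between_def by auto
  show False
  proof (cases "Suc y < length P")
    case True
    then have "{P ! x, P ! Suc y} \<in> E" using walk xy unfolding is_walk_def by auto
    then show False using shortest_path_no_shortcut[of x "Suc y"] True xy by auto
  next
    case False
    then have "P \<noteq> []" "y = length P - 1" using xy by auto
    then have "last P = P ! y" by (simp add: last_conv_nth)
    then have "last (take (Suc x) P) = last P"
      using xy by (simp add: take_Suc_conv_app_nth)
    moreover have "hd (take (Suc x) P) = hd P" using xy by simp
    ultimately have "walk_between V E s t (take (Suc x) P)"
      using is_walk_take[OF walk] xy ends unfolding walk_between_def by simp
    then show False using shortest_path_length_le xy by fastforce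
  qed
qed

lemma shortest_path_induced:
  assumes "graph V E" "x_property V E"
  shows "induced_path V E P"
proof
  have walk: "is_walk V E P" using shortest unfolding shortest_path_def walk_between_def by auto
  then show "set P \<subseteq> V" "Suc i < length P \<Longrightarrow> {P ! i, P ! Suc i} \<in> E" for i
    unfolding is_walk_def by auto
  show "x = Suc y \<or> y = Suc x"
    if "x < length P" "y < length P" "{P ! x, P ! y} \<in> E" for x y
  proof -
    have "x \<noteq> y" using that(3) graph_no_loop[OF assms(1)] by auto
    moreover have "\<not> Suc x < y" "\<not> Suc y < x"
      using that shortest_path_no_shortcut[of x y] shortest_path_no_shortcut[of y x]
      by (auto simp: insert_commute)
    ultimately show ?thesis by linarith
  qed
qed (use assms shortest_path_distinct in auto)

end

theorem lemma7:
  fixes V :: "('a::linorder) set" and E :: "'a set set" and s t :: 'a and P :: "'a list"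
  assumes "graph V E"
    and "x_property V E"
    and "s \<in> V" and "t \<in> V" and "s < t"
    and "dist_finite V E s t"
    and "shortest_path V E s t P"
  shows "(righti P < lefti P \<longleftrightarrow> path_has_crossing P)
    \<and> (path_has_crossing P \<longrightarrow>
         righti P = lefti P - 1 \<and>
         (\<forall>i j. i < righti P \<and> lefti P < j \<and> j < length P \<longrightarrow> P ! i < P ! j))"
proof -
  interpret induced_path V E P using shortest_path_induced[OF assms(7,1,2)] .
  have "P \<noteq> []" and ends: "hd P < last P"
    using assms(5,7) unfolding shortest_path_def walk_between_def is_walk_def by simp_all
  have crossing_shape: "righti P < lefti P \<and> righti P = lefti P - 1 \<and>
      (\<forall>i j. i < righti P \<and> lefti P < j \<and> j < length P \<longrightarrow> P ! i < P ! j)"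
    if crossing: "path_has_crossing P"
  proof -
    obtain i where bound: "Suc (Suc (Suc i)) < length P" and "crossing_down i \<or> crossing_up i"
      using crossing by (rule path_has_crossing_pattern)
    then have down: "crossing_down i" using crossing_up_last_less_hd ends by fastforce
    then show ?thesis
      using righti_lefti_down[OF bound down] down_prefix_less_suffix[OF bound down] by simp
  qed
  show ?thesis
    using crossing_shape righti_less_lefti_crossing[OF \<open>P \<noteq> []\<close> ends] by blast
qed

end
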